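(* There exists a finite constant $C$ such that for any $k\ge0$, any vertex $v\in\mathbb T_k$ and any $0\le j\le k$, \[\mathbb E\big[(X_v(j)-Y_v(j))^6\big]\le Cj^3\quad\text{and}\quad\mathbb E\big[(X_v(j)+Y_v(j)-j)^6\big]\le Cj^3.\]
   Context: Let $R(x,y)=\frac{x+1}{y+1}\vee\frac{y+1}{x+1}$ and $P(x,y)=\frac{y+1}{2(x+1)}\mathbb 1_{x\ge y}+(1-\frac{x+1}{2(y+1)})\mathbb 1_{x<y}$. Let $\mathbb T$ be the infinite rooted binary tree with root $\rho$, $\mathbb T_n$ its $n$th generation, and write $v1,v2$ for the children of $v$. Attach to each vertex $v$ independent random variables $\mathcal U^{\rm split}_v,\mathcal U^{\rm dir}_v$ uniform on $(0,1)$ (and an independent Exp(1) variable $\mathbbm e_v$), independent over $v$. Set $B_\rho=H_\rho=1$. Recursively, let $D_v=1$ if $\mathcal U^{\rm dir}_v\le P(-\log B_v,-\log H_v)$ and $D_v=0$ otherwise; if $D_v=1$ set $B_{v1}=\mathcal U^{\rm split}_vB_v$, $B_{v2}=(1-\mathcal U^{\rm split}_v)B_v$, $H_{v1}=H_{v2}=H_v$; if $D_v=0$ set $H_{v1}=\mathcal U^{\rm split}_vH_v$, $H_{v2}=(1-\mathcal U^{\rm split}_v)H_v$, $B_{v1}=B_{v2}=B_v$. Let $X_v=-\log B_v$, $Y_v=-\log H_v$. For $v\in\mathbb T_k$ and $j\le k$, $X_v(j)$ and $Y_v(j)$ denote $X_u$ and $Y_u$ where $u$ is the unique ancestor of $v$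 in $\mathbb T_j$. *)

theory Defs
  imports "HOL-Probability.Probability"
begin

text \<open>Vertices of the infinite rooted binary tree are lists of booleans; the root is [],
  and the children v1, v2 of v are True # v and False # v (newest step at the head).
  The generation of v is length v; the ancestor of v in generation j is drop (length v - j) v.\<close>

definition Pfun :: "real \<Rightarrow> real \<Rightarrow> real" where
  "Pfun x y = (if x \<ge> y then (y + 1) / (2 * (x + 1)) else 1 - (x + 1) / (2 * (y + 1)))"

text \<open>Sample space: one uniform (0,1) variable for each pair (v, b);
  (v, True) is U^split_v and (v, False) is U^dir_v, all independent.\<close>

definition Omega :: "((bool list \<times> bool) \<Rightarrow> real) measure" where
  "Omega = PiM UNIV (\<lambda>_. uniform_measure lborel {0<..<1::real})"

definition Usplit :: "((bool list \<times> bool) \<Rightarrow> real) \<Rightarrow> bool list \<Rightarrow> real" where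
  "Usplit \<omega> v = \<omega> (v, True)"

definition Udir :: "((bool list \<times> bool) \<Rightarrow> real) \<Rightarrow> bool list \<Rightarrow> real" where
  "Udir \<omega> v = \<omega> (v, False)"

fun BH :: "((bool list \<times> bool) \<Rightarrow> real) \<Rightarrow> bool list \<Rightarrow> real \<times> real" where
  "BH \<omega> [] = (1, 1)"
| "BH \<omega> (c # v) =
     (let b = fst (BH \<omega> v); h = snd (BH \<omega> v); u = Usplit \<omega> v;
          d = (Udir \<omega> v \<le> Pfun (- ln b) (- ln h))
      in if d then ((if c then u * b else (1 - u) * b), h)
         else (b, (if c then u * h else (1 - u) * h)))"

definition Xv :: "((bool list \<times> bool) \<Rightarrow> real) \<Rightarrow> bool list \<Rightarrow> real" where
  "Xv \<omega> v = - ln (fst (BH \<omega> v))"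

definition Yv :: "((bool list \<times> bool) \<Rightarrow> real) \<Rightarrow> bool list \<Rightarrow> real" where
  "Yv \<omega> v = - ln (snd (BH \<omega> v))"

definition Xanc :: "((bool list \<times> bool) \<Rightarrow> real) \<Rightarrow> bool list \<Rightarrow> nat \<Rightarrow> real" where
  "Xanc \<omega> v j = Xv \<omega> (drop (length v - j) v)"

definition Yanc :: "((bool list \<times> bool) \<Rightarrow> real) \<Rightarrow> bool list \<Rightarrow> nat \<Rightarrow> real" where
  "Yanc \<omega> v j = Yv \<omega> (drop (length v - j) v)"

end

(*
  Along the path from the root to v every generation adds an independent Exp(1) variable
  E = -ln U to either X or Y.  Hence S = X + Y - n moves by the centred increment E - 1, while
  D = X - Y moves by +E or -E, and P(X, Y) makes the move towards 0 at least as likely as the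
  move away from it, so even moments of D grow no faster than for a symmetric step.  Expanding
  (w + xi)^(2k+2) to second order, the linear term contributes nothing in expectation and the
  remaining terms are at most a constant times (1 + w^(2k)) (1 + E)^(2k+2).  This gives
  m_(2k+2)(n+1) <= m_(2k+2)(n) + K_k (1 + m_(2k)(n)) for the moments m_(2j)(n) of D and of S
  after n generations, hence m_(2k)(n) <= C_k n^k by induction on k and n; k = 3 is the claim.
*)
theory Submission
  imports Defs "HOL-Real_Asymp.Real_Asymp"
begin

section \<open>Elementary inequalities\<close>

lemma abs_power_le_one_plus_even_power:
  fixes w :: real
  assumes "m \<le> 2 * k"
  shows "\<bar>w\<bar> ^ m \<le> 1 + w ^ (2 * k)"
proof (cases "\<bar>w\<bar> \<le> 1")
  case True
  then have "\<bar>w\<bar> ^ m \<le> 1" by (simp add: power_le_one)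
  moreover have "0 \<le> w ^ (2 * k)" by (simp add: power_mult)
  ultimately show ?thesis by linarith
next
  case False
  then have "\<bar>w\<bar> ^ m \<le> \<bar>w\<bar> ^ (2 * k)" using assms by (intro power_increasing) auto
  then show ?thesis by (simp add: power_mult)
qed

text \<open>The linear term is kept exactly because it cancels in expectation in both applications (by
  symmetry for \<open>Dv\<close>, by centring for \<open>Sv\<close>); all terms of order two and higher go into the error.\<close>
lemma even_power_add_le:
  fixes w f q :: real
  assumes f: "\<bar>f\<bar> \<le> q" and q: "1 \<le> q"
  shows "(w + f) ^ (2 * Suc k) \<le>
    w ^ (2 * Suc k) + (2 * Suc k) * w ^ (2 * k + 1) * f + 4 ^ Suc k * q ^ (2 * Suc k) * (1 + w ^ (2 * k))"
proof -
  define n where "n = 2 * Suc k"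
  define t where "t i = real (n choose i) * f ^ i * w ^ (n - i)" for i
  have split: "(\<Sum>i\<le>n. g i) = g 0 + g 1 + (\<Sum>i\<le>2 * k. g (i + 2))" for g :: "nat \<Rightarrow> real"
    unfolding n_def by (simp add: sum.atMost_Suc_shift del: sum.atMost_Suc)
  have "(w + f) ^ n = (\<Sum>i\<le>n. t i)"
    unfolding t_def by (subst add.commute) (rule binomial_ring)
  also have "\<dots> = t 0 + t 1 + (\<Sum>i\<le>2 * k. t (i + 2))"
    by (rule split)
  also have "\<dots> \<le> w ^ n + n * w ^ (2 * k + 1) * f + (\<Sum>i\<le>2 * k. real (n choose (i + 2)) * (q ^ n * (1 + w ^ (2 * k))))"
  proof (intro add_mono sum_mono)
    fix i assume i: "i \<in> {..2 * k}"
    have "f ^ (i + 2) * w ^ (n - (i + 2)) \<le> \<bar>f ^ (i + 2) * w ^ (2 * k - i)\<bar>"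
      by (simp add: n_def)
    also have "\<dots> = \<bar>f\<bar> ^ (i + 2) * \<bar>w\<bar> ^ (2 * k - i)"
      by (simp add: abs_mult power_abs)
    also have "\<dots> \<le> q ^ n * (1 + w ^ (2 * k))"
    proof (rule mult_mono)
      have "\<bar>f\<bar> ^ (i + 2) \<le> q ^ (i + 2)" using f by (intro power_mono) auto
      also have "\<dots> \<le> q ^ n" using q i unfolding n_def by (intro power_increasing) auto
      finally show "\<bar>f\<bar> ^ (i + 2) \<le> q ^ n" .
      show "\<bar>w\<bar> ^ (2 * k - i) \<le> 1 + w ^ (2 * k)" by (rule abs_power_le_one_plus_even_power) auto
    qed (use q in auto)
    finally show "t (i + 2) \<le> real (n choose (i + 2)) * (q ^ n * (1 + w ^ (2 * k)))"
      unfolding t_def by (simp add: mult.assoc mult_left_mono)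
  qed (auto simp: t_def n_def)
  also have "(\<Sum>i\<le>2 * k. real (n choose (i + 2)) * (q ^ n * (1 + w ^ (2 * k)))) \<le> 4 ^ Suc k * q ^ n * (1 + w ^ (2 * k))"
  proof -
    have "(\<Sum>i\<le>n. real (n choose i)) = 2 ^ n"
      by (metis choose_row_sum of_nat_numeral of_nat_power of_nat_sum)
    then have "(\<Sum>i\<le>2 * k. real (n choose (i + 2))) \<le> 2 ^ n"
      using split[of "\<lambda>i. real (n choose i)"] by simp
    also have "(2::real) ^ n = 4 ^ Suc k"
      by (simp add: n_def power_mult)
    finally have "(\<Sum>i\<le>2 * k. real (n choose (i + 2))) \<le> 4 ^ Suc k" .
    then have "(\<Sum>i\<le>2 * k. real (n choose (i + 2))) * (q ^ n * (1 + w ^ (2 * k)))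
        \<le> 4 ^ Suc k * (q ^ n * (1 + w ^ (2 * k)))"
      by (rule mult_right_mono) (use q in \<open>simp add: power_mult\<close>)
    then show ?thesis by (simp add: sum_distrib_right mult.assoc)
  qed
  finally show ?thesis unfolding n_def by simp
qed

lemma even_power_symmetric_mean_le:
  fixes z e :: real
  assumes "0 \<le> e"
  shows "((z + e) ^ (2 * Suc k) + (z - e) ^ (2 * Suc k)) / 2 \<le>
    z ^ (2 * Suc k) + 4 ^ Suc k * (1 + e) ^ (2 * Suc k) * (1 + z ^ (2 * k))"
proof -
  define L where "L = real (2 * Suc k) * z ^ (2 * k + 1) * e"
  define P where "P = 4 ^ Suc k * (1 + e) ^ (2 * Suc k) * (1 + z ^ (2 * k))"
  have "\<bar>e\<bar> \<le> 1 + e" "\<bar>- e\<bar> \<le> 1 + e" "1 \<le> 1 + e" using assms by auto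
  from even_power_add_le[OF this(1,3), of z k] even_power_add_le[OF this(2,3), of z k]
  have "(z + e) ^ (2 * Suc k) \<le> z ^ (2 * Suc k) + L + P" "(z - e) ^ (2 * Suc k) \<le> z ^ (2 * Suc k) - L + P"
    unfolding L_def P_def by (simp_all only: mult_minus_right diff_conv_add_uminus[symmetric])
  moreover have "a \<le> c + L + P' \<Longrightarrow> b \<le> c - L + P' \<Longrightarrow> (a + b) / 2 \<le> c + P'" for a b c P' :: real
    by (simp add: field_simps)
  ultimately show ?thesis unfolding P_def by blast
qed

lemma power_le_fact_mult_exp:
  fixes x :: real assumes "0 \<le> x" shows "x ^ n \<le> fact n * exp x"
proof -
  have "(\<Sum>i\<in>{n}. x ^ i /\<^sub>R fact i) \<le> (\<Sum>i. x ^ i /\<^sub>R fact i)"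
    using assms by (intro sum_le_suminf summable_exp_generic) auto
  then show ?thesis by (simp add: exp_def field_simps)
qed

lemma power_Suc_add_Suc_power_le: "n ^ Suc k + Suc n ^ k \<le> Suc n ^ Suc k"
proof -
  have "n ^ k * n \<le> Suc n ^ k * n" by (intro mult_right_mono power_mono) auto
  then show ?thesis by (simp add: algebra_simps)
qed

lemma moment_recursion_bound:
  fixes m :: "nat \<Rightarrow> 'a list \<Rightarrow> ennreal" and K :: "nat \<Rightarrow> ennreal"
  assumes base: "\<And>v. m 0 v \<le> 1"
    and init: "\<And>k. m (Suc k) [] = 0"
    and step: "\<And>k c v. m (Suc k) (c # v) \<le> m (Suc k) v + K k * (1 + m k v)"
    and K: "\<And>k. K k < \<top>"
  shows "\<exists>C<\<top>. \<forall>v. m k v \<le> C * of_nat (length v ^ k)"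
proof (induction k)
  case 0
  show ?case using base by (intro exI[of _ 1]) auto
next
  case (Suc k)
  then obtain C where "C < \<top>" and C: "\<And>v. m k v \<le> C * of_nat (length v ^ k)" by blast
  define C' where "C' = K k * (1 + C)"
  have "C' < \<top>" unfolding C'_def using K[of k] \<open>C < \<top>\<close> by (simp add: ennreal_mult_less_top)
  have "m (Suc k) v \<le> C' * of_nat (length v ^ Suc k)" for v
  proof (induction v)
    case (Cons c v)
    define n where "n = length v"
    have "1 + m k v \<le> 1 + C * of_nat (n ^ k)"
      using C[of v] by (simp add: n_def add_left_mono)
    also have "\<dots> \<le> of_nat (Suc n ^ k) + C * of_nat (Suc n ^ k)"
      by (intro add_mono mult_left_mono) (auto simp: power_mono)
    finally have "K k * (1 + m k v) \<le> C' * of_nat (Suc n ^ k)"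
      unfolding C'_def by (simp add: distrib_right mult.assoc mult_left_mono)
    then have "m (Suc k) (c # v) \<le> C' * of_nat (n ^ Suc k) + C' * of_nat (Suc n ^ k)"
      using step[of k c v] Cons.IH unfolding n_def by (meson add_mono order_trans)
    also have "\<dots> \<le> C' * of_nat (Suc n ^ Suc k)"
      by (simp only: flip: distrib_left of_nat_add)
        (intro mult_left_mono of_nat_mono power_Suc_add_Suc_power_le; simp)
    finally show ?case by (simp add: n_def)
  qed (simp add: init)
  with \<open>C' < \<top>\<close> show ?case by blast
qed

lemma (in prob_space) nn_integral_mono_centered:
  assumes [measurable]: "T \<in> borel_measurable M" "P \<in> borel_measurable M" "\<xi> \<in> borel_measurable M"
    and mean: "(\<integral>\<^sup>+x. ennreal (\<xi> x) \<partial>M) = ennreal \<mu>" and "0 \<le> \<mu>"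
    and AE: "AE x in M. 0 \<le> \<xi> x \<and> 0 \<le> T x \<and> 0 \<le> P x \<and> T x \<le> P x + \<alpha> * (\<xi> x - \<mu>)"
  shows "(\<integral>\<^sup>+x. ennreal (T x) \<partial>M) \<le> (\<integral>\<^sup>+x. ennreal (P x) \<partial>M)"
\<comment> \<open>The centred term is moved to the side where it is nonnegative, integrated, and the finite
  constant \<open>\<bar>\<alpha>\<bar> * \<mu>\<close> is cancelled.\<close>
proof (cases "0 \<le> \<alpha>")
  case True
  have "(\<integral>\<^sup>+x. ennreal (T x) + ennreal \<alpha> * ennreal \<mu> \<partial>M) \<le> (\<integral>\<^sup>+x. ennreal (P x) + ennreal \<alpha> * ennreal (\<xi> x) \<partial>M)"
    using AE True \<open>0 \<le> \<mu>\<close>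
    by (intro nn_integral_mono_AE, elim eventually_mono)
      (simp add: ennreal_plus[symmetric] ennreal_mult[symmetric] del: ennreal_plus, simp add: algebra_simps)
  then have "(\<integral>\<^sup>+x. ennreal (T x) \<partial>M) + ennreal \<alpha> * ennreal \<mu> \<le> (\<integral>\<^sup>+x. ennreal (P x) \<partial>M) + ennreal \<alpha> * ennreal \<mu>"
    by (simp add: nn_integral_add nn_integral_cmult mean emeasure_space_1)
  then show ?thesis by (simp add: ennreal_mult_eq_top_iff)
next
  case False
  then obtain \<beta> where \<alpha>: "\<alpha> = - \<beta>" and "0 \<le> \<beta>" by (metis minus_minus neg_0_le_iff_le nle_le)
  have "(\<integral>\<^sup>+x. ennreal (T x) + ennreal \<beta> * ennreal (\<xi> x) \<partial>M) \<le> (\<integral>\<^sup>+x. ennreal (P x) + ennreal \<beta> * ennreal \<mu> \<partial>M)"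
    using AE \<open>0 \<le> \<beta>\<close> \<open>0 \<le> \<mu>\<close> unfolding \<alpha>
    by (intro nn_integral_mono_AE, elim eventually_mono)
      (simp add: ennreal_plus[symmetric] ennreal_mult[symmetric] del: ennreal_plus, simp add: algebra_simps)
  then have "(\<integral>\<^sup>+x. ennreal (T x) \<partial>M) + ennreal \<beta> * ennreal \<mu> \<le> (\<integral>\<^sup>+x. ennreal (P x) \<partial>M) + ennreal \<beta> * ennreal \<mu>"
    by (simp add: nn_integral_add nn_integral_cmult mean emeasure_space_1)
  then show ?thesis by (simp add: ennreal_mult_eq_top_iff)
qed

section \<open>The uniform distribution on the unit interval\<close>

abbreviation Unif :: "real measure" where
  "Unif \<equiv> uniform_measure lborel {0<..<1}"

interpretation Unif: prob_space Unif
  by (intro prob_space_uniform_measure) auto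

lemma nn_integral_Unif:
  assumes [measurable]: "f \<in> borel_measurable borel"
  shows "(\<integral>\<^sup>+x. f x \<partial>Unif) = (\<integral>\<^sup>+x. f x * indicator {0<..<1} x \<partial>lborel)"
  by (subst nn_integral_uniform_measure) (auto simp: emeasure_lborel_Ioo divide_ennreal_def)

lemma measure_Unif_atMost_half: "measure Unif {..1/2} = 1/2"
proof -
  have "{0<..<1::real} \<inter> {..1/2} = {0<..1/2}" by auto
  then show ?thesis by (simp add: measure_uniform_measure)
qed

lemma AE_Unif_Ioo: "AE x in Unif. 0 < x \<and> x < 1"
  by (rule AE_uniform_measureI) auto

lemma nn_integral_Ioo01_FTC:
  fixes f F :: "real \<Rightarrow> real"
  assumes F: "\<And>x. 0 < x \<Longrightarrow> x < 1 \<Longrightarrow> DERIV F x :> f x"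
    and f: "\<And>x. 0 < x \<Longrightarrow> x < 1 \<Longrightarrow> isCont f x"
    and nonneg: "\<And>x. 0 < x \<Longrightarrow> x < 1 \<Longrightarrow> 0 \<le> f x"
    and A: "(F \<longlongrightarrow> A) (at_right 0)" and B: "(F \<longlongrightarrow> B) (at_left 1)"
  shows "(\<integral>\<^sup>+x. ennreal (f x) * indicator {0<..<1} x \<partial>lborel) = ennreal (B - A)"
proof -
  have ereal_Ioo: "0 < ereal x \<and> ereal x < 1 \<longleftrightarrow> 0 < x \<and> x < 1" for x
    by (simp add: zero_ereal_def one_ereal_def)
  have A': "((F \<circ> real_of_ereal) \<longlongrightarrow> A) (at_right 0)"
    and B': "((F \<circ> real_of_ereal) \<longlongrightarrow> B) (at_left 1)"
    using A B by (simp_all add: zero_ereal_def one_ereal_def ereal_tendsto_simps)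
  have "set_integrable lborel (einterval 0 1) f" "(LBINT x=0..1. f x) = B - A"
    by (rule interval_integral_FTC_nonneg[OF _ _ _ _ A' B']; use F f nonneg in \<open>simp add: ereal_Ioo\<close>)+
  moreover have "einterval 0 1 = {0<..<1::real}"
    by (simp add: zero_ereal_def one_ereal_def)
  ultimately have int: "integrable lborel (\<lambda>x. indicator {0<..<1::real} x * f x)"
    and val: "(\<integral>x. indicator {0<..<1::real} x * f x \<partial>lborel) = B - A"
    by (simp_all add: set_integrable_def interval_lebesgue_integral_def set_lebesgue_integral_def)
  have "(\<integral>\<^sup>+x. ennreal (f x) * indicator {0<..<1} x \<partial>lborel)
      = (\<integral>\<^sup>+x. ennreal (indicator {0<..<1::real} x * f x) \<partial>lborel)"
    by (intro nn_integral_cong) (auto split: split_indicator)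
  also have "\<dots> = ennreal (B - A)"
    using nonneg by (subst nn_integral_eq_integral[OF int]) (auto split: split_indicator simp: val)
  finally show ?thesis .
qed

lemma nn_integral_Unif_inverse_sqrt: "(\<integral>\<^sup>+x. ennreal (1 / sqrt x) \<partial>Unif) = 2"
proof -
  have "(\<integral>\<^sup>+x. ennreal (1 / sqrt x) * indicator {0<..<1} x \<partial>lborel) = ennreal (2 - 0)"
  proof (rule nn_integral_Ioo01_FTC[where F="\<lambda>x. 2 * sqrt x"])
    fix x :: real assume "0 < x" "x < 1"
    then show "((\<lambda>x. 2 * sqrt x) has_real_derivative 1 / sqrt x) (at x)"
      by (auto intro!: derivative_eq_intros simp: field_simps)
    show "isCont (\<lambda>x. 1 / sqrt x) x" using \<open>0 < x\<close> by (auto intro!: continuous_intros)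
  qed (auto, real_asymp+)
  then show ?thesis by (simp add: nn_integral_Unif)
qed

lemma nn_integral_Unif_minus_ln: "(\<integral>\<^sup>+x. ennreal (- ln x) \<partial>Unif) = 1"
proof -
  have "(\<integral>\<^sup>+x. ennreal (- ln x) * indicator {0<..<1} x \<partial>lborel) = ennreal (1 - 0)"
  proof (rule nn_integral_Ioo01_FTC[where F="\<lambda>x. x - x * ln x"])
    fix x :: real assume "0 < x" "x < 1"
    then show "((\<lambda>x. x - x * ln x) has_real_derivative - ln x) (at x)"
      by (auto intro!: derivative_eq_intros simp: field_simps)
    show "isCont (\<lambda>x. - ln x) x" using \<open>0 < x\<close> by (auto intro!: continuous_intros)
  qed (auto, real_asymp+)
  then show ?thesis by (simp add: nn_integral_Unif)
qed

text \<open>The comparison function \<open>exp ((1 - ln u) / 2) = sqrt (e / u)\<close> is still integrable on \<open>(0, 1)\<close>.\<close>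
lemma one_minus_ln_power_le:
  fixes u :: real assumes "0 < u" "u \<le> 1"
  shows "(1 - ln u) ^ n \<le> 2 ^ n * fact n * exp (1 / 2) / sqrt u"
proof -
  have "ln u \<le> 0" using assms by simp
  have "sqrt u = exp (ln u / 2)"
    using assms by (simp add: powr_def flip: powr_half_sqrt)
  then have "exp ((1 - ln u) / 2) = exp (1 / 2) / sqrt u"
    by (simp add: diff_divide_distrib exp_diff)
  moreover have "((1 - ln u) / 2) ^ n \<le> fact n * exp ((1 - ln u) / 2)"
    using \<open>ln u \<le> 0\<close> by (intro power_le_fact_mult_exp) simp
  ultimately show ?thesis by (simp add: power_divide field_simps)
qed

lemma nn_integral_Unif_one_minus_ln_power_finite:
  "(\<integral>\<^sup>+u. ennreal ((1 - ln u) ^ n) \<partial>Unif) < \<top>"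
proof -
  define c where "c = 2 ^ n * fact n * exp (1 / 2 :: real)"
  have "(\<integral>\<^sup>+u. ennreal ((1 - ln u) ^ n) \<partial>Unif) \<le> (\<integral>\<^sup>+u. ennreal c * ennreal (1 / sqrt u) \<partial>Unif)"
  proof (rule nn_integral_mono_AE)
    show "AE u in Unif. ennreal ((1 - ln u) ^ n) \<le> ennreal c * ennreal (1 / sqrt u)"
      using AE_Unif_Ioo
    proof eventually_elim
      case (elim u)
      then have "ennreal ((1 - ln u) ^ n) \<le> ennreal (c * (1 / sqrt u))"
        using one_minus_ln_power_le[of u n] by (intro ennreal_leI) (simp add: c_def)
      moreover have "ennreal (c * (1 / sqrt u)) = ennreal c * ennreal (1 / sqrt u)"
        using elim by (intro ennreal_mult) (auto simp: c_def)
      ultimately show ?case by simp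
    qed
  qed
  also have "\<dots> = ennreal c * 2"
    by (simp add: nn_integral_cmult nn_integral_Unif_inverse_sqrt)
  finally show ?thesis by (simp add: ennreal_mult_less_top order_le_less_trans)
qed

text \<open>The increment of \<open>X\<close> or \<open>Y\<close> along the edge from \<open>v\<close> to its child \<open>c # v\<close> when
  \<open>Usplit \<omega> v = u\<close>; under \<open>Unif\<close> it is \<open>Exp(1)\<close>-distributed.\<close>
definition neg_ln_split :: "bool \<Rightarrow> real \<Rightarrow> real" where
  "neg_ln_split c u = - ln (if c then u else 1 - u)"

lemma neg_ln_split_measurable[measurable]: "neg_ln_split c \<in> borel_measurable borel"
  unfolding neg_ln_split_def by measurable

lemma AE_Unif_neg_ln_split_pos: "AE u in Unif. 0 < neg_ln_split c u"
  using AE_Unif_Ioo by eventually_elim (auto simp: neg_ln_split_def)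

lemma nn_integral_Unif_neg_ln_split:
  assumes [measurable]: "f \<in> borel_measurable borel"
  shows "(\<integral>\<^sup>+u. f (neg_ln_split c u) \<partial>Unif) = (\<integral>\<^sup>+u. f (- ln u) \<partial>Unif)"
proof (cases c)
  case False
  have "(\<integral>\<^sup>+u. f (- ln u) \<partial>Unif) = (\<integral>\<^sup>+u. f (- ln u) * indicator {0<..<1} u \<partial>lborel)"
    by (simp add: nn_integral_Unif)
  also have "\<dots> = ennreal \<bar>-1\<bar> * (\<integral>\<^sup>+u. f (- ln (1 + -1 * u)) * indicator {0<..<1} (1 + -1 * u) \<partial>lborel)"
    by (rule nn_integral_real_affine) auto
  also have "\<dots> = (\<integral>\<^sup>+u. f (neg_ln_split c u) \<partial>Unif)"
    using False by (auto simp: nn_integral_Unif neg_ln_split_def intro!: nn_integral_cong split: split_indicator)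
  finally show ?thesis ..
qed (simp add: neg_ln_split_def)

lemma nn_integral_Unif_neg_ln_split_mean: "(\<integral>\<^sup>+u. ennreal (neg_ln_split c u) \<partial>Unif) = 1"
  by (simp add: nn_integral_Unif_neg_ln_split nn_integral_Unif_minus_ln)

text \<open>The step is \<open>+e\<close> with probability \<open>p\<close>, which favours moving towards the origin.\<close>
lemma nn_integral_Unif_biased_sign_le:
  fixes z e p :: real
  assumes "even n" "0 \<le> e" and pos: "0 < z \<Longrightarrow> p \<le> 1/2" and neg: "z < 0 \<Longrightarrow> 1/2 \<le> p"
  shows "(\<integral>\<^sup>+d. ennreal ((z + (if d \<le> p then e else - e)) ^ n) \<partial>Unif)
    \<le> ennreal (((z + e) ^ n + (z - e) ^ n) / 2)"
proof -
  define A where "A = (z + e) ^ n"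
  define B where "B = (z - e) ^ n"
  define q where "q = measure Unif {..p}"
  have "0 \<le> A" "0 \<le> B" using \<open>even n\<close> by (simp_all add: A_def B_def zero_le_even_power)
  have "0 \<le> q" "q \<le> 1" unfolding q_def by (rule measure_nonneg, rule Unif.prob_le_1)
  have "emeasure Unif {..p} = ennreal q"
    unfolding q_def by (rule Unif.emeasure_eq_measure)
  moreover have "emeasure Unif {p<..} = ennreal (1 - q)"
    using Unif.prob_compl[of "{..p}"]
    by (simp add: Unif.emeasure_eq_measure q_def Compl_eq_Diff_UNIV[symmetric] not_le
        del: measure_uniform_measure)
  ultimately have "(\<integral>\<^sup>+d. ennreal ((z + (if d \<le> p then e else - e)) ^ n) \<partial>Unif)
      = ennreal A * ennreal q + ennreal B * ennreal (1 - q)"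
    by (subst nn_integral_cong[where v="\<lambda>d. ennreal A * indicator {..p} d + ennreal B * indicator {p<..} d"])
      (auto simp: A_def B_def nn_integral_add nn_integral_cmult_indicator split: split_indicator
        simp del: emeasure_uniform_measure)
  also have "\<dots> = ennreal (A * q + B * (1 - q))"
    using \<open>0 \<le> A\<close> \<open>0 \<le> B\<close> \<open>0 \<le> q\<close> \<open>q \<le> 1\<close> by (simp add: ennreal_mult ennreal_plus)
  also have "\<dots> \<le> ennreal ((A + B) / 2)"
  proof (rule ennreal_leI)
    have "measure Unif {..p} \<le> measure Unif {..1/2}" if "p \<le> 1/2"
      using that by (intro Unif.finite_measure_mono) auto
    moreover have "measure Unif {..1/2} \<le> measure Unif {..p}" if "1/2 \<le> p"
      using that by (intro Unif.finite_measure_mono) auto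
    moreover have "B \<le> A" if "0 \<le> z"
      unfolding A_def B_def using that \<open>0 \<le> e\<close> \<open>even n\<close> by (intro power_mono_even) auto
    moreover have "A \<le> B" if "z \<le> 0"
      unfolding A_def B_def using that \<open>0 \<le> e\<close> \<open>even n\<close> by (intro power_mono_even) auto
    ultimately have "(q - 1/2) * (A - B) \<le> 0"
      using pos neg measure_Unif_atMost_half unfolding q_def
      by (cases z "0::real" rule: linorder_cases) (auto intro: mult_nonpos_nonneg mult_nonneg_nonpos)
    then show "A * q + B * (1 - q) \<le> (A + B) / 2" by (simp add: field_simps)
  qed
  finally show ?thesis by (simp add: A_def B_def)
qed

section \<open>The product space\<close>

interpretation Omega: prob_space Omega
  unfolding Omega_def by (intro prob_space_PiM Unif.prob_space_axioms)

lemma measurable_Omega_coordinate_Unif: "(\<lambda>\<omega>. \<omega> i) \<in> Omega \<rightarrow>\<^sub>M Unif"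
  unfolding Omega_def by measurable

lemma measurable_Omega_coordinate: "(\<lambda>\<omega>. \<omega> i) \<in> borel_measurable Omega"
  using measurable_Omega_coordinate_Unif by (simp cong: measurable_cong_sets)

lemma measurable_Usplit[measurable]: "(\<lambda>\<omega>. Usplit \<omega> v) \<in> borel_measurable Omega"
  and measurable_Udir[measurable]: "(\<lambda>\<omega>. Udir \<omega> v) \<in> borel_measurable Omega"
  unfolding Usplit_def Udir_def by (rule measurable_Omega_coordinate)+

lemma AE_Omega_Ioo: "AE \<omega> in Omega. \<forall>i. \<omega> i \<in> {0<..<1}"
proof (rule AE_all_countable[THEN iffD2], intro allI)
  fix i
  show "AE \<omega> in Omega. \<omega> i \<in> {0<..<1}"
    using AE_Unif_Ioo unfolding Omega_def
    by (intro AE_PiM_component Unif.prob_space_axioms) auto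
qed

lemma nn_integral_Omega_coordinate:
  fixes F :: "((bool list \<times> bool) \<Rightarrow> real) \<Rightarrow> real \<Rightarrow> ennreal"
  assumes meas[measurable]: "(\<lambda>(\<omega>, x). F \<omega> x) \<in> borel_measurable (Omega \<Otimes>\<^sub>M Unif)"
    and indep: "\<And>\<omega> z. F (fun_upd \<omega> i z) = F \<omega>"
  shows "(\<integral>\<^sup>+\<omega>. F \<omega> (\<omega> i) \<partial>Omega) = (\<integral>\<^sup>+\<omega>. \<integral>\<^sup>+x. F \<omega> x \<partial>Unif \<partial>Omega)"
\<comment> \<open>Split \<open>Omega\<close> into coordinate \<open>i\<close> and the rest; as \<open>F \<omega>\<close> ignores \<open>\<omega> i\<close>, that coordinate
  may be replaced by an independent copy.\<close>
proof -
  define P where "P = PiM (UNIV - {i}) (\<lambda>_. Unif)"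
  interpret P: prob_space P unfolding P_def by (intro prob_space_PiM Unif.prob_space_axioms)
  interpret UP: pair_prob_space Unif P ..
  have distr_eq: "distr (Unif \<Otimes>\<^sub>M P) Omega (\<lambda>(x, X). fun_upd X i x) = Omega"
    using distr_pair_PiM_eq_PiM[of "UNIV - {i}" "\<lambda>_. Unif" i] Unif.prob_space_axioms
    unfolding P_def Omega_def by (simp add: insert_absorb)
  have upd[measurable]: "(\<lambda>(x, X). fun_upd X i x) \<in> Unif \<Otimes>\<^sub>M P \<rightarrow>\<^sub>M Omega"
  proof -
    have "(\<lambda>p. fun_upd (snd p) i (fst p)) \<in> Unif \<Otimes>\<^sub>M P \<rightarrow>\<^sub>M Omega"
      unfolding Omega_def P_def by (rule measurable_fun_upd[where J="UNIV - {i}"]) auto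
    then show ?thesis by (simp add: case_prod_beta')
  qed
  have [measurable]: "(\<lambda>\<omega>. F \<omega> (\<omega> i)) \<in> borel_measurable Omega"
  proof -
    have "(\<lambda>\<omega>. (\<omega>, \<omega> i)) \<in> Omega \<rightarrow>\<^sub>M Omega \<Otimes>\<^sub>M Unif"
      using measurable_Omega_coordinate_Unif[measurable] by measurable
    from measurable_compose[OF this meas] show ?thesis by simp
  qed
  have integrate: "(\<integral>\<^sup>+\<omega>. G \<omega> \<partial>Omega) = (\<integral>\<^sup>+X. \<integral>\<^sup>+x. G (fun_upd X i x) \<partial>Unif \<partial>P)"
    if [measurable]: "G \<in> borel_measurable Omega" for G
  proof -
    have "(\<integral>\<^sup>+\<omega>. G \<omega> \<partial>Omega) = (\<integral>\<^sup>+p. G (fun_upd (snd p) i (fst p)) \<partial>(Unif \<Otimes>\<^sub>M P))"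
      by (subst distr_eq[symmetric], subst nn_integral_distr) (auto simp: case_prod_beta')
    also have "\<dots> = (\<integral>\<^sup>+X. \<integral>\<^sup>+x. G (fun_upd X i x) \<partial>Unif \<partial>P)"
      using measurable_compose[OF upd that] by (subst UP.nn_integral_snd[symmetric]) (auto simp: case_prod_beta')
    finally show ?thesis .
  qed
  have "(\<integral>\<^sup>+\<omega>. F \<omega> (\<omega> i) \<partial>Omega) = (\<integral>\<^sup>+X. \<integral>\<^sup>+x. F X x \<partial>Unif \<partial>P)"
    by (simp add: integrate indep)
  also have "\<dots> = (\<integral>\<^sup>+X. \<integral>\<^sup>+y. \<integral>\<^sup>+x. F (fun_upd X i y) x \<partial>Unif \<partial>Unif \<partial>P)"
    by (simp add: indep Unif.emeasure_space_1)
  also have "\<dots> = (\<integral>\<^sup>+\<omega>. \<integral>\<^sup>+x. F \<omega> x \<partial>Unif \<partial>Omega)"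
    by (simp add: integrate)
  finally show ?thesis .
qed

lemma nn_integral_Omega_two_coordinates:
  fixes F :: "((bool list \<times> bool) \<Rightarrow> real) \<Rightarrow> real \<Rightarrow> real \<Rightarrow> ennreal"
  assumes meas[measurable]: "(\<lambda>p. F (fst (fst p)) (snd (fst p)) (snd p)) \<in> borel_measurable ((Omega \<Otimes>\<^sub>M Unif) \<Otimes>\<^sub>M Unif)"
    and "i \<noteq> j"
    and indep: "\<And>\<omega> z. F (fun_upd \<omega> i z) = F \<omega>" "\<And>\<omega> z. F (fun_upd \<omega> j z) = F \<omega>"
  shows "(\<integral>\<^sup>+\<omega>. F \<omega> (\<omega> i) (\<omega> j) \<partial>Omega) = (\<integral>\<^sup>+\<omega>. \<integral>\<^sup>+a. \<integral>\<^sup>+d. F \<omega> a d \<partial>Unif \<partial>Unif \<partial>Omega)"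
proof -
  have "(\<integral>\<^sup>+\<omega>. F \<omega> (\<omega> i) (\<omega> j) \<partial>Omega) = (\<integral>\<^sup>+\<omega>. \<integral>\<^sup>+d. F \<omega> (\<omega> i) d \<partial>Unif \<partial>Omega)"
  proof (rule nn_integral_Omega_coordinate[where F="\<lambda>\<omega>. F \<omega> (\<omega> i)"])
    have "(\<lambda>p. ((fst p, fst p i), snd p)) \<in> Omega \<Otimes>\<^sub>M Unif \<rightarrow>\<^sub>M (Omega \<Otimes>\<^sub>M Unif) \<Otimes>\<^sub>M Unif"
      using measurable_Omega_coordinate_Unif[measurable] by measurable
    from measurable_compose[OF this meas]
    show "(\<lambda>(\<omega>, d). F \<omega> (\<omega> i) d) \<in> borel_measurable (Omega \<Otimes>\<^sub>M Unif)"
      by (simp add: case_prod_beta')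
    show "F (fun_upd \<omega> j z) (fun_upd \<omega> j z i) = F \<omega> (\<omega> i)" for \<omega> z
      using \<open>i \<noteq> j\<close> by (simp add: indep)
  qed
  also have "\<dots> = (\<integral>\<^sup>+\<omega>. \<integral>\<^sup>+a. \<integral>\<^sup>+d. F \<omega> a d \<partial>Unif \<partial>Unif \<partial>Omega)"
  proof (rule nn_integral_Omega_coordinate[where F="\<lambda>\<omega> a. \<integral>\<^sup>+d. F \<omega> a d \<partial>Unif"])
    show "(\<lambda>(\<omega>, a). \<integral>\<^sup>+d. F \<omega> a d \<partial>Unif) \<in> borel_measurable (Omega \<Otimes>\<^sub>M Unif)"
      using Unif.borel_measurable_nn_integral[of "\<lambda>x d. F (fst x) (snd x) d"] meas
      by (simp add: case_prod_beta')
  qed (simp add: indep)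
  finally show ?thesis .
qed

section \<open>The recursive construction\<close>

lemma Pfun_measurable[measurable (raw)]:
  assumes [measurable]: "f \<in> borel_measurable M" "g \<in> borel_measurable M"
  shows "(\<lambda>x. Pfun (f x) (g x)) \<in> borel_measurable M"
  unfolding Pfun_def by measurable

lemma Pfun_le_half: "0 \<le> y \<Longrightarrow> y < x \<Longrightarrow> Pfun x y \<le> 1/2"
  unfolding Pfun_def by (auto simp: field_simps)

lemma Pfun_ge_half: "0 \<le> x \<Longrightarrow> x < y \<Longrightarrow> 1/2 \<le> Pfun x y"
  unfolding Pfun_def by (auto simp: field_simps)

lemma measurable_BH[measurable]:
  "(\<lambda>\<omega>. fst (BH \<omega> v)) \<in> borel_measurable Omega" "(\<lambda>\<omega>. snd (BH \<omega> v)) \<in> borel_measurable Omega"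
proof (induction v)
  case (Cons c v)
  note [measurable] = Cons.IH
  show "(\<lambda>\<omega>. fst (BH \<omega> (c # v))) \<in> borel_measurable Omega" "(\<lambda>\<omega>. snd (BH \<omega> (c # v))) \<in> borel_measurable Omega"
    by (simp_all add: Let_def) measurable
qed simp_all

lemma measurable_Xv[measurable]: "(\<lambda>\<omega>. Xv \<omega> v) \<in> borel_measurable Omega"
  unfolding Xv_def by measurable

lemma measurable_Yv[measurable]: "(\<lambda>\<omega>. Yv \<omega> v) \<in> borel_measurable Omega"
  unfolding Yv_def by measurable

lemma BH_fun_upd: "length v \<le> length w \<Longrightarrow> BH (fun_upd \<omega> (w, b) z) v = BH \<omega> v"
  by (induction v) (auto simp: Usplit_def Udir_def Let_def)

lemma BH_bounds:
  assumes "\<forall>i. \<omega> i \<in> {0<..<1}"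
  shows "fst (BH \<omega> v) \<in> {0<..1} \<and> snd (BH \<omega> v) \<in> {0<..1}"
proof (induction v)
  case (Cons c v)
  have "Usplit \<omega> v \<in> {0<..<1}" using assms by (simp add: Usplit_def)
  then have "u * b \<in> {0<..1}" "(1 - u) * b \<in> {0<..1}" if "b \<in> {0<..1}" "u = Usplit \<omega> v" for u b
    using that by (auto simp: mult_le_one)
  with Cons.IH show ?case by (simp add: Let_def)
qed simp

lemma Xv_nonneg: "\<forall>i. \<omega> i \<in> {0<..<1} \<Longrightarrow> 0 \<le> Xv \<omega> v"
  and Yv_nonneg: "\<forall>i. \<omega> i \<in> {0<..<1} \<Longrightarrow> 0 \<le> Yv \<omega> v"
  using BH_bounds[of \<omega> v] by (simp_all add: Xv_def Yv_def)

lemma Xv_Cons: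
  assumes "\<forall>i. \<omega> i \<in> {0<..<1}"
  shows "Xv \<omega> (c # v) = Xv \<omega> v +
    (if Udir \<omega> v \<le> Pfun (Xv \<omega> v) (Yv \<omega> v) then neg_ln_split c (Usplit \<omega> v) else 0)"
proof -
  have "0 < Usplit \<omega> v" "0 < 1 - Usplit \<omega> v" using assms by (auto simp: Usplit_def)
  moreover have "0 < fst (BH \<omega> v)" "0 < snd (BH \<omega> v)" using BH_bounds[OF assms] by auto
  ultimately show ?thesis by (cases c) (simp_all add: Let_def Xv_def Yv_def neg_ln_split_def ln_mult)
qed

lemma Yv_Cons:
  assumes "\<forall>i. \<omega> i \<in> {0<..<1}"
  shows "Yv \<omega> (c # v) = Yv \<omega> v +
    (if Udir \<omega> v \<le> Pfun (Xv \<omega> v) (Yv \<omega> v) then 0 else neg_ln_split c (Usplit \<omega> v))"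
proof -
  have "0 < Usplit \<omega> v" "0 < 1 - Usplit \<omega> v" using assms by (auto simp: Usplit_def)
  moreover have "0 < fst (BH \<omega> v)" "0 < snd (BH \<omega> v)" using BH_bounds[OF assms] by auto
  ultimately show ?thesis by (cases c) (simp_all add: Let_def Xv_def Yv_def neg_ln_split_def ln_mult)
qed

definition Dv :: "((bool list \<times> bool) \<Rightarrow> real) \<Rightarrow> bool list \<Rightarrow> real" where
  "Dv \<omega> v = Xv \<omega> v - Yv \<omega> v"

definition Sv :: "((bool list \<times> bool) \<Rightarrow> real) \<Rightarrow> bool list \<Rightarrow> real" where
  "Sv \<omega> v = Xv \<omega> v + Yv \<omega> v - real (length v)"

lemma measurable_Dv[measurable]: "(\<lambda>\<omega>. Dv \<omega> v) \<in> borel_measurable Omega"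
  unfolding Dv_def by measurable

lemma measurable_Sv[measurable]: "(\<lambda>\<omega>. Sv \<omega> v) \<in> borel_measurable Omega"
  unfolding Sv_def by measurable

lemma Dv_Nil: "Dv \<omega> [] = 0"
  and Sv_Nil: "Sv \<omega> [] = 0"
  by (simp_all add: Dv_def Sv_def Xv_def Yv_def)

lemma Dv_Cons:
  "\<forall>i. \<omega> i \<in> {0<..<1} \<Longrightarrow> Dv \<omega> (c # v) = Dv \<omega> v +
    (if Udir \<omega> v \<le> Pfun (Xv \<omega> v) (Yv \<omega> v) then neg_ln_split c (Usplit \<omega> v) else - neg_ln_split c (Usplit \<omega> v))"
  by (simp add: Dv_def Xv_Cons Yv_Cons)

lemma Sv_Cons:
  "\<forall>i. \<omega> i \<in> {0<..<1} \<Longrightarrow> Sv \<omega> (c # v) = Sv \<omega> v + (neg_ln_split c (Usplit \<omega> v) - 1)"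
  by (simp add: Sv_def Xv_Cons Yv_Cons)

lemma Xanc_minus_Yanc: "j \<le> length v \<Longrightarrow> Xanc \<omega> v j - Yanc \<omega> v j = Dv \<omega> (drop (length v - j) v)"
  by (simp add: Xanc_def Yanc_def Dv_def)

lemma Xanc_plus_Yanc: "j \<le> length v \<Longrightarrow> Xanc \<omega> v j + Yanc \<omega> v j - real j = Sv \<omega> (drop (length v - j) v)"
  by (simp add: Xanc_def Yanc_def Sv_def)

section \<open>Moment recursion\<close>

definition step_const :: "nat \<Rightarrow> ennreal" where
  "step_const k = ennreal (4 ^ Suc k) * (\<integral>\<^sup>+u. ennreal ((1 - ln u) ^ (2 * Suc k)) \<partial>Unif)"

lemma step_const_finite: "step_const k < \<top>"
  using nn_integral_Unif_one_minus_ln_power_finite[of "2 * Suc k"]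
  unfolding step_const_def by (simp only: ennreal_mult_less_top ennreal_less_top simp_thms)

lemma nn_integral_Unif_step_bound:
  "(\<integral>\<^sup>+a. ennreal (w ^ (2 * Suc k) + 4 ^ Suc k * (1 + neg_ln_split c a) ^ (2 * Suc k) * (1 + w ^ (2 * k))) \<partial>Unif)
    = ennreal (w ^ (2 * Suc k)) + step_const k * ennreal (1 + w ^ (2 * k))"
proof -
  define n where "n = 2 * Suc k"
  define b where "b = ennreal (4 ^ Suc k) * ennreal (1 + w ^ (2 * k))"
  have "0 \<le> w ^ (2 * k)" "0 \<le> w ^ n" unfolding n_def by (rule zero_le_even_power, simp)+
  then have "(\<integral>\<^sup>+a. ennreal (w ^ n + 4 ^ Suc k * (1 + neg_ln_split c a) ^ n * (1 + w ^ (2 * k))) \<partial>Unif)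
      = (\<integral>\<^sup>+a. ennreal (w ^ n) + b * ennreal ((1 + neg_ln_split c a) ^ n) \<partial>Unif)"
  proof (intro nn_integral_cong_AE, use AE_Unif_neg_ln_split_pos[of c] in eventually_elim)
    case (elim a)
    then have "0 \<le> (1 + neg_ln_split c a) ^ n" by simp
    then have "ennreal (4 ^ Suc k * (1 + neg_ln_split c a) ^ n * (1 + w ^ (2 * k)))
        = b * ennreal ((1 + neg_ln_split c a) ^ n)"
      unfolding b_def using \<open>0 \<le> w ^ (2 * k)\<close>
      by (simp only: ennreal_mult[symmetric] mult_nonneg_nonneg zero_le_power) (simp add: mult_ac)
    then show ?case using \<open>0 \<le> w ^ n\<close> \<open>0 \<le> (1 + neg_ln_split c a) ^ n\<close> \<open>0 \<le> w ^ (2 * k)\<close>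
      by (simp add: ennreal_plus)
  qed
  also have "\<dots> = ennreal (w ^ n) + b * (\<integral>\<^sup>+a. ennreal ((1 + neg_ln_split c a) ^ n) \<partial>Unif)"
  proof -
    have "(\<lambda>a. ennreal ((1 + neg_ln_split c a) ^ n)) \<in> borel_measurable Unif" by measurable
    then show ?thesis by (simp add: nn_integral_add nn_integral_cmult Unif.emeasure_space_1)
  qed
  also have "(\<integral>\<^sup>+a. ennreal ((1 + neg_ln_split c a) ^ n) \<partial>Unif) = (\<integral>\<^sup>+u. ennreal ((1 - ln u) ^ n) \<partial>Unif)"
    by (subst nn_integral_Unif_neg_ln_split) simp_all
  finally show ?thesis
    unfolding step_const_def b_def n_def by (simp only: mult.assoc mult.commute mult.left_commute)
qed

lemma nn_integral_Omega_step_bound: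
  assumes [measurable]: "f \<in> borel_measurable Omega"
  shows "(\<integral>\<^sup>+\<omega>. ennreal (f \<omega> ^ (2 * Suc k)) + step_const k * ennreal (1 + f \<omega> ^ (2 * k)) \<partial>Omega)
    = (\<integral>\<^sup>+\<omega>. ennreal (f \<omega> ^ (2 * Suc k)) \<partial>Omega) + step_const k * (1 + \<integral>\<^sup>+\<omega>. ennreal (f \<omega> ^ (2 * k)) \<partial>Omega)"
proof -
  have "ennreal (1 + f \<omega> ^ (2 * k)) = 1 + ennreal (f \<omega> ^ (2 * k))" for \<omega>
    by (simp add: ennreal_plus zero_le_even_power)
  then have "(\<integral>\<^sup>+\<omega>. ennreal (f \<omega> ^ (2 * Suc k)) + step_const k * ennreal (1 + f \<omega> ^ (2 * k)) \<partial>Omega)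
      = (\<integral>\<^sup>+\<omega>. ennreal (f \<omega> ^ (2 * Suc k)) + step_const k * (1 + ennreal (f \<omega> ^ (2 * k))) \<partial>Omega)"
    by simp
  also have "\<dots> = (\<integral>\<^sup>+\<omega>. ennreal (f \<omega> ^ (2 * Suc k)) \<partial>Omega) + step_const k * (\<integral>\<^sup>+\<omega>. 1 + ennreal (f \<omega> ^ (2 * k)) \<partial>Omega)"
  proof -
    have "(\<lambda>\<omega>. ennreal (f \<omega> ^ (2 * Suc k))) \<in> borel_measurable Omega"
      "(\<lambda>\<omega>. 1 + ennreal (f \<omega> ^ (2 * k))) \<in> borel_measurable Omega"
      by measurable
    then show ?thesis by (simp add: nn_integral_add nn_integral_cmult)
  qed
  also have "(\<integral>\<^sup>+\<omega>. 1 + ennreal (f \<omega> ^ (2 * k)) \<partial>Omega) = 1 + (\<integral>\<^sup>+\<omega>. ennreal (f \<omega> ^ (2 * k)) \<partial>Omega)"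
    by (subst nn_integral_add) (simp_all add: Omega.emeasure_space_1)
  finally show ?thesis .
qed

lemma nn_integral_Dv_Cons_le:
  "(\<integral>\<^sup>+\<omega>. ennreal (Dv \<omega> (c # v) ^ (2 * Suc k)) \<partial>Omega) \<le>
    (\<integral>\<^sup>+\<omega>. ennreal (Dv \<omega> v ^ (2 * Suc k)) \<partial>Omega) + step_const k * (1 + \<integral>\<^sup>+\<omega>. ennreal (Dv \<omega> v ^ (2 * k)) \<partial>Omega)"
proof -
  define n where "n = 2 * Suc k"
  define F where "F \<omega> a d = ennreal ((Dv \<omega> v +
      (if d \<le> Pfun (Xv \<omega> v) (Yv \<omega> v) then neg_ln_split c a else - neg_ln_split c a)) ^ n)" for \<omega> a d
  have "(\<integral>\<^sup>+\<omega>. ennreal (Dv \<omega> (c # v) ^ n) \<partial>Omega) = (\<integral>\<^sup>+\<omega>. F \<omega> (\<omega> (v, True)) (\<omega> (v, False)) \<partial>Omega)"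
    using AE_Omega_Ioo
    by (intro nn_integral_cong_AE, eventually_elim) (simp add: F_def Dv_Cons Usplit_def Udir_def)
  also have "\<dots> = (\<integral>\<^sup>+\<omega>. \<integral>\<^sup>+a. \<integral>\<^sup>+d. F \<omega> a d \<partial>Unif \<partial>Unif \<partial>Omega)"
  proof (rule nn_integral_Omega_two_coordinates)
    show "(\<lambda>p. F (fst (fst p)) (snd (fst p)) (snd p)) \<in> borel_measurable ((Omega \<Otimes>\<^sub>M Unif) \<Otimes>\<^sub>M Unif)"
      unfolding F_def by measurable
  qed (auto simp: F_def Dv_def Xv_def Yv_def BH_fun_upd)
  also have "\<dots> \<le> (\<integral>\<^sup>+\<omega>. ennreal (Dv \<omega> v ^ n) + step_const k * ennreal (1 + Dv \<omega> v ^ (2 * k)) \<partial>Omega)"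
  proof (intro nn_integral_mono_AE, use AE_Omega_Ioo in eventually_elim)
    case (elim \<omega>)
    define z where "z = Dv \<omega> v"
    have sign: "(0 < z \<longrightarrow> Pfun (Xv \<omega> v) (Yv \<omega> v) \<le> 1/2) \<and> (z < 0 \<longrightarrow> 1/2 \<le> Pfun (Xv \<omega> v) (Yv \<omega> v))"
      using Xv_nonneg[OF elim] Yv_nonneg[OF elim] Pfun_le_half Pfun_ge_half by (auto simp: z_def Dv_def)
    have "(\<integral>\<^sup>+a. \<integral>\<^sup>+d. F \<omega> a d \<partial>Unif \<partial>Unif)
        \<le> (\<integral>\<^sup>+a. ennreal (((z + neg_ln_split c a) ^ n + (z - neg_ln_split c a) ^ n) / 2) \<partial>Unif)"
      using AE_Unif_neg_ln_split_pos[of c]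
    proof (intro nn_integral_mono_AE, eventually_elim)
      case (elim a)
      show ?case unfolding F_def z_def[symmetric]
        by (rule nn_integral_Unif_biased_sign_le) (use elim sign in \<open>auto simp: n_def\<close>)
    qed
    also have "\<dots> \<le> (\<integral>\<^sup>+a. ennreal (z ^ n + 4 ^ Suc k * (1 + neg_ln_split c a) ^ n * (1 + z ^ (2 * k))) \<partial>Unif)"
      using AE_Unif_neg_ln_split_pos[of c] unfolding n_def
      by (intro nn_integral_mono_AE, elim eventually_mono, intro ennreal_leI even_power_symmetric_mean_le) simp
    also have "\<dots> = ennreal (z ^ n) + step_const k * ennreal (1 + z ^ (2 * k))"
      unfolding n_def by (rule nn_integral_Unif_step_bound)
    finally show ?case by (simp add: z_def)
  qed
  also have "\<dots> = (\<integral>\<^sup>+\<omega>. ennreal (Dv \<omega> v ^ n) \<partial>Omega) + step_const k * (1 + \<integral>\<^sup>+\<omega>. ennreal (Dv \<omega> v ^ (2 * k)) \<partial>Omega)"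
    unfolding n_def by (rule nn_integral_Omega_step_bound) measurable
  finally show ?thesis unfolding n_def .
qed

lemma nn_integral_Sv_Cons_le:
  "(\<integral>\<^sup>+\<omega>. ennreal (Sv \<omega> (c # v) ^ (2 * Suc k)) \<partial>Omega) \<le>
    (\<integral>\<^sup>+\<omega>. ennreal (Sv \<omega> v ^ (2 * Suc k)) \<partial>Omega) + step_const k * (1 + \<integral>\<^sup>+\<omega>. ennreal (Sv \<omega> v ^ (2 * k)) \<partial>Omega)"
proof -
  define n where "n = 2 * Suc k"
  define F where "F \<omega> a = ennreal ((Sv \<omega> v + (neg_ln_split c a - 1)) ^ n)" for \<omega> a
  have "(\<integral>\<^sup>+\<omega>. ennreal (Sv \<omega> (c # v) ^ n) \<partial>Omega) = (\<integral>\<^sup>+\<omega>. F \<omega> (\<omega> (v, True)) \<partial>Omega)"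
    using AE_Omega_Ioo
    by (intro nn_integral_cong_AE, eventually_elim) (simp add: F_def Sv_Cons Usplit_def)
  also have "\<dots> = (\<integral>\<^sup>+\<omega>. \<integral>\<^sup>+a. F \<omega> a \<partial>Unif \<partial>Omega)"
  proof (rule nn_integral_Omega_coordinate)
    show "(\<lambda>(\<omega>, a). F \<omega> a) \<in> borel_measurable (Omega \<Otimes>\<^sub>M Unif)"
      unfolding F_def by measurable
  qed (auto simp: F_def Sv_def Xv_def Yv_def BH_fun_upd)
  also have "\<dots> \<le> (\<integral>\<^sup>+\<omega>. ennreal (Sv \<omega> v ^ n) + step_const k * ennreal (1 + Sv \<omega> v ^ (2 * k)) \<partial>Omega)"
  proof (rule nn_integral_mono)
    fix \<omega>
    define w where "w = Sv \<omega> v"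
    have "(\<integral>\<^sup>+a. F \<omega> a \<partial>Unif)
        \<le> (\<integral>\<^sup>+a. ennreal (w ^ n + 4 ^ Suc k * (1 + neg_ln_split c a) ^ n * (1 + w ^ (2 * k))) \<partial>Unif)"
      unfolding F_def w_def[symmetric]
    proof (rule Unif.nn_integral_mono_centered[where \<xi>="neg_ln_split c" and \<mu>=1 and \<alpha>="n * w ^ (2 * k + 1)"])
      show "AE a in Unif. 0 \<le> neg_ln_split c a \<and> 0 \<le> (w + (neg_ln_split c a - 1)) ^ n \<and>
          0 \<le> w ^ n + 4 ^ Suc k * (1 + neg_ln_split c a) ^ n * (1 + w ^ (2 * k)) \<and>
          (w + (neg_ln_split c a - 1)) ^ n \<le> w ^ n + 4 ^ Suc k * (1 + neg_ln_split c a) ^ n * (1 + w ^ (2 * k))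
            + n * w ^ (2 * k + 1) * (neg_ln_split c a - 1)"
        using AE_Unif_neg_ln_split_pos[of c]
      proof eventually_elim
        case (elim a)
        define e where "e = neg_ln_split c a"
        have "(w + (e - 1)) ^ (2 * Suc k) \<le> w ^ (2 * Suc k) + real (2 * Suc k) * w ^ (2 * k + 1) * (e - 1)
            + 4 ^ Suc k * (1 + e) ^ (2 * Suc k) * (1 + w ^ (2 * k))"
          by (rule even_power_add_le) (use elim in \<open>auto simp: e_def\<close>)
        moreover have "0 \<le> (w + (e - 1)) ^ (2 * Suc k)" "0 \<le> w ^ (2 * Suc k)" "0 \<le> w ^ (2 * k)"
          by (rule zero_le_even_power, simp)+
        moreover have "0 \<le> e" using elim by (simp add: e_def)
        moreover have "0 \<le> 4 ^ Suc k * ((1 + e) ^ (2 * Suc k) * (1 + w ^ (2 * k)))"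
          using elim \<open>0 \<le> w ^ (2 * k)\<close> by (simp add: e_def)
        ultimately show ?case
          unfolding e_def[symmetric] n_def by (simp only: mult.assoc) argo
      qed
    qed (simp_all add: nn_integral_Unif_neg_ln_split_mean)
    also have "\<dots> = ennreal (w ^ n) + step_const k * ennreal (1 + w ^ (2 * k))"
      unfolding n_def by (rule nn_integral_Unif_step_bound)
    finally show "(\<integral>\<^sup>+a. F \<omega> a \<partial>Unif) \<le> ennreal (Sv \<omega> v ^ n) + step_const k * ennreal (1 + Sv \<omega> v ^ (2 * k))"
      by (simp add: w_def)
  qed
  also have "\<dots> = (\<integral>\<^sup>+\<omega>. ennreal (Sv \<omega> v ^ n) \<partial>Omega) + step_const k * (1 + \<integral>\<^sup>+\<omega>. ennreal (Sv \<omega> v ^ (2 * k)) \<partial>Omega)"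
    unfolding n_def by (rule nn_integral_Omega_step_bound) measurable
  finally show ?thesis unfolding n_def .
qed

lemma Omega_moment_bound:
  fixes f :: "((bool list \<times> bool) \<Rightarrow> real) \<Rightarrow> bool list \<Rightarrow> real"
  assumes "\<And>\<omega>. f \<omega> [] = 0"
    and "\<And>k c v. (\<integral>\<^sup>+\<omega>. ennreal (f \<omega> (c # v) ^ (2 * Suc k)) \<partial>Omega) \<le>
      (\<integral>\<^sup>+\<omega>. ennreal (f \<omega> v ^ (2 * Suc k)) \<partial>Omega) + step_const k * (1 + \<integral>\<^sup>+\<omega>. ennreal (f \<omega> v ^ (2 * k)) \<partial>Omega)"
  shows "\<exists>C\<ge>0. \<forall>v. (\<integral>\<^sup>+\<omega>. ennreal (f \<omega> v ^ (2 * k)) \<partial>Omega) \<le> ennreal (C * real (length v) ^ k)"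
proof -
  have "\<exists>C<\<top>. \<forall>v. (\<integral>\<^sup>+\<omega>. ennreal (f \<omega> v ^ (2 * k)) \<partial>Omega) \<le> C * of_nat (length v ^ k)"
    by (rule moment_recursion_bound[where K=step_const]) (use assms in \<open>simp_all add: Omega.emeasure_space_1 step_const_finite\<close>)
  then obtain C where "C < \<top>" and C: "\<forall>v. (\<integral>\<^sup>+\<omega>. ennreal (f \<omega> v ^ (2 * k)) \<partial>Omega) \<le> C * of_nat (length v ^ k)"
    by blast
  have "C * of_nat (n ^ k) = ennreal (enn2real C * real n ^ k)" for n
    using \<open>C < \<top>\<close> by (subst ennreal_mult) (auto simp: ennreal_of_nat_eq_real_of_nat ennreal_power)
  with C show ?thesis by (intro exI[of _ "enn2real C"]) auto
qed

theorem lemma5p1: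
  "\<exists>C::real. \<forall>k::nat. \<forall>v::bool list. \<forall>j::nat. length v = k \<longrightarrow> j \<le> k \<longrightarrow>
     (\<integral>\<^sup>+ \<omega>. ennreal ((Xanc \<omega> v j - Yanc \<omega> v j) ^ 6) \<partial>Omega) \<le> ennreal (C * real j ^ 3) \<and>
     (\<integral>\<^sup>+ \<omega>. ennreal ((Xanc \<omega> v j + Yanc \<omega> v j - real j) ^ 6) \<partial>Omega) \<le> ennreal (C * real j ^ 3)"
proof -
  obtain CD CS where "0 \<le> CD" "0 \<le> CS"
    and D: "\<And>u. (\<integral>\<^sup>+\<omega>. ennreal (Dv \<omega> u ^ 6) \<partial>Omega) \<le> ennreal (CD * real (length u) ^ 3)"
    and S: "\<And>u. (\<integral>\<^sup>+\<omega>. ennreal (Sv \<omega> u ^ 6) \<partial>Omega) \<le> ennreal (CS * real (length u) ^ 3)"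
    using Omega_moment_bound[OF Dv_Nil nn_integral_Dv_Cons_le, of 3]
      Omega_moment_bound[OF Sv_Nil nn_integral_Sv_Cons_le, of 3] by auto
  have le_sum: "ennreal (CD * real j ^ 3) \<le> ennreal ((CD + CS) * real j ^ 3)"
    "ennreal (CS * real j ^ 3) \<le> ennreal ((CD + CS) * real j ^ 3)" for j
    using \<open>0 \<le> CD\<close> \<open>0 \<le> CS\<close> by (auto intro!: ennreal_leI mult_right_mono)
  show ?thesis
  proof (intro exI[of _ "CD + CS"] allI impI conjI)
    fix k j :: nat and v :: "bool list"
    define u where "u = drop (length v - j) v"
    assume "length v = k" "j \<le> k"
    then have "j \<le> length v" "length u = j" by (auto simp: u_def)
    then show "(\<integral>\<^sup>+\<omega>. ennreal ((Xanc \<omega> v j - Yanc \<omega> v j) ^ 6) \<partial>Omega) \<le> ennreal ((CD + CS) * real j ^ 3)"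
      and "(\<integral>\<^sup>+\<omega>. ennreal ((Xanc \<omega> v j + Yanc \<omega> v j - real j) ^ 6) \<partial>Omega) \<le> ennreal ((CD + CS) * real j ^ 3)"
      using order_trans[OF D[of u] le_sum(1)] order_trans[OF S[of u] le_sum(2)]
      by (simp_all add: Xanc_minus_Yanc Xanc_plus_Yanc u_def)
  qed
qed

end
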